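(* Let $M\in\frac12\mathbb N$, $\varepsilon\in\{0,1\}$, $\tau\in\mathbb H$, and fix $z\in\mathbb C$. Then, as a function of $u$, $F_{M,\varepsilon}(z,u)$ satisfies, for all $\lambda,\mu\in\mathbb Z$, \[F_{M,\varepsilon}(z,u+\lambda\tau+\mu)=(-1)^{2M\mu+\lambda\varepsilon}e^{-2\pi iM(\lambda^2\tau+2\lambda u)}F_{M,\varepsilon}(z,u).\] Moreover, $u\mapsto F_{M,\varepsilon}(z,u)$ is meromorphic on $\mathbb C$, its only poles are simple poles located in $z+\mathbb Z\tau+\mathbb Z$, and its residue at $u=z$ equals $\frac{1}{2\pi i}$.
   Context: Notation: $e(x):=e^{2\pi ix}$, $q:=e(\tau)$. For $M\in\frac12\mathbb N$ and $\varepsilon\in\{0,1\}$, \[F_{M,\varepsilon}(z,u):=e\bigl(M(z-u)\bigr)\sum_{n\in\mathbb Z}\frac{(-1)^{n\varepsilon}e(-2Mnu)\,q^{Mn(n+1)}}{1-q^n e(z-u)}.\] *)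

theory Defs
  imports "HOL-Analysis.Analysis"
begin

definition ee :: "complex \<Rightarrow> complex" where
  "ee x = exp (2 * of_real pi * \<i> * x)"

text \<open>F_{M,eps}(z,u) with q = e(tau), q^k written as e(k tau).
  The sum over n in Z is the (absolutely convergent) infinite sum infsum over UNIV::int.\<close>
definition F :: "real \<Rightarrow> int \<Rightarrow> complex \<Rightarrow> complex \<Rightarrow> complex \<Rightarrow> complex" where
  "F M \<epsilon> \<tau> z u =
     ee (of_real M * (z - u)) *
     (\<Sum>\<^sub>\<infinity>n::int. (-1) powi (n * \<epsilon>) * ee (- 2 * of_real M * of_int n * u)
          * ee (of_real M * of_int (n * (n + 1)) * \<tau>)
          / (1 - ee (of_int n * \<tau>) * ee (z - u)))"

definition lattice_coset :: "complex \<Rightarrow> complex \<Rightarrow> complex set" where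
  "lattice_coset \<tau> z = {z + of_int a * \<tau> + of_int b | a b. True}"

definition at_most_simple_pole :: "(complex \<Rightarrow> complex) \<Rightarrow> complex \<Rightarrow> bool" where
  "at_most_simple_pole f w \<longleftrightarrow> (\<exists>c. ((\<lambda>u. (u - w) * f u) \<longlongrightarrow> c) (at w))"

definition simple_pole_residue :: "(complex \<Rightarrow> complex) \<Rightarrow> complex \<Rightarrow> complex \<Rightarrow> bool" where
  "simple_pole_residue f w r \<longleftrightarrow> ((\<lambda>u. (u - w) * f u) \<longlongrightarrow> r) (at w)"

end

theory Submission
  imports Defs "HOL-Complex_Analysis.Complex_Analysis"
begin

text \<open>
  Quasi-periodicity is a formal identity: translating \<open>u\<close> by \<open>l\<tau> + k\<close> and the summation index
  by \<open>l\<close> multiplies every summand by one and the same factor, and reindexing an unordered sum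
  over \<open>\<int>\<close> along a bijection needs no convergence at all.

  For the analytic statements, the \<open>n\<close>-th summand is bounded by \<open>2 exp (-|n|)\<close> locally uniformly in
  \<open>u\<close> once \<open>|n|\<close> is large, because the Gaussian factor \<open>q^(M n (n + 1))\<close> beats \<open>e(-2Mnu)\<close> and the
  denominator stays away from \<open>0\<close>. By the Weierstrass M-test all but finitely many summands add up to a
  holomorphic function near any point, and the finitely many remaining ones have simple poles
  only on \<open>z + \<int>\<tau> + \<int>\<close>. At \<open>u = z\<close> only the summand \<open>n = 0\<close>, namely \<open>1 / (1 - e(z - u))\<close>, is
  singular, with residue \<open>1 / (2\<pi>i)\<close>; quasi-periodicity carries the simple pole at \<open>z\<close> to the
  rest of the lattice coset.
\<close>

lemma ee_add: "ee (a + b) = ee a * ee b"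
  by (simp add: ee_def distrib_left exp_add)

lemma norm_ee: "norm (ee w) = exp (- 2 * pi * Im w)"
  by (simp add: ee_def)

lemma ee_of_int: "ee (of_int k) = 1"
  by (simp add: ee_def mult_ac)

lemma ee_eqI: "a = b + of_int k \<Longrightarrow> ee a = ee b"
  by (simp add: ee_add ee_of_int)

lemma ee_of_int_half: "ee (of_int k / 2) = (-1) powi k"
proof -
  have "ee (of_int k / 2) = exp (of_int k * (of_real pi * \<i>))"
    by (simp add: ee_def mult_ac)
  also have "\<dots> = (-1) powi k"
    by (simp flip: exp_power_int)
  finally show ?thesis .
qed

lemma ee_eq_1_iff: "ee w = 1 \<longleftrightarrow> w \<in> \<int>"
  by (auto simp: ee_def exp_eq_1 complex_is_Int_iff)

lemma norm_one_minus_ee_ge: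
  assumes "1 \<le> \<bar>Im s\<bar>"
  shows "1/2 \<le> norm (1 - ee s)"
proof -
  have "2 \<le> exp (2 * pi)"
    using exp_ge_add_one_self[of "2 * pi"] pi_gt3 by linarith
  also have "\<dots> \<le> exp (2 * pi * \<bar>Im s\<bar>)"
    using assms by simp
  finally have big: "2 \<le> exp (2 * pi * \<bar>Im s\<bar>)" .
  consider "Im s \<ge> 1" | "Im s \<le> -1"
    using assms by linarith
  then show ?thesis
  proof cases
    case 1
    then have "norm (ee s) \<le> 1/2"
      using big by (simp add: norm_ee exp_minus field_simps)
    then show ?thesis
      using norm_triangle_ineq2[of 1 "ee s"] by simp
  next
    case 2
    then have "2 \<le> norm (ee s)"
      using big by (simp add: norm_ee)
    then show ?thesis
      using norm_triangle_ineq3[of "ee s" 1] by (simp add: norm_minus_commute)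
  qed
qed

definition F_summand :: "real \<Rightarrow> int \<Rightarrow> complex \<Rightarrow> complex \<Rightarrow> int \<Rightarrow> complex \<Rightarrow> complex" where
  "F_summand M \<epsilon> \<tau> z n u = (-1) powi (n * \<epsilon>) * ee (- 2 * of_real M * of_int n * u)
     * ee (of_real M * of_int (n * (n + 1)) * \<tau>) / (1 - ee (of_int n * \<tau>) * ee (z - u))"

lemma F_eq_infsum: "F M \<epsilon> \<tau> z u = ee (of_real M * (z - u)) * (\<Sum>\<^sub>\<infinity>n. F_summand M \<epsilon> \<tau> z n u)"
  by (simp add: F_def F_summand_def)

lemma F_summand_shift:
  assumes "M = real m / 2"
  shows "F_summand M \<epsilon> \<tau> z (j + l) (u + of_int l * \<tau> + of_int k) =
     (-1) powi (l * \<epsilon>) * ee (- 2 * of_real M * of_int l * u + of_real M * of_int (l - l^2) * \<tau>)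
     * F_summand M \<epsilon> \<tau> z j u"
proof -
  have M: "of_real M = (of_nat m / 2 :: complex)"
    unfolding assms by simp
  have den: "ee (of_int (j + l) * \<tau>) * ee (z - (u + of_int l * \<tau> + of_int k))
      = ee (of_int j * \<tau>) * ee (z - u)"
    unfolding ee_add[symmetric] by (rule ee_eqI[where k = "- k"]) (simp add: algebra_simps)
  have num: "ee (- 2 * of_real M * of_int (j + l) * (u + of_int l * \<tau> + of_int k))
      * ee (of_real M * of_int ((j + l) * (j + l + 1)) * \<tau>)
    = ee (- 2 * of_real M * of_int l * u + of_real M * of_int (l - l^2) * \<tau>)
      * (ee (- 2 * of_real M * of_int j * u) * ee (of_real M * of_int (j * (j + 1)) * \<tau>))"
    unfolding ee_add[symmetric]
    by (rule ee_eqI[where k = "- int m * (j + l) * k"]) (simp add: M algebra_simps power2_eq_square)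
  have sign: "(-1::complex) powi ((j + l) * \<epsilon>) = (-1) powi (l * \<epsilon>) * (-1) powi (j * \<epsilon>)"
    by (simp add: distrib_right power_int_add)
  show ?thesis
    unfolding F_summand_def den sign using num by (simp add: mult_ac)
qed

lemma infsum_F_summand_shift:
  assumes "M = real m / 2"
  shows "(\<Sum>\<^sub>\<infinity>n. F_summand M \<epsilon> \<tau> z n (u + of_int l * \<tau> + of_int k)) =
    (-1) powi (l * \<epsilon>) * ee (- 2 * of_real M * of_int l * u + of_real M * of_int (l - l^2) * \<tau>)
    * (\<Sum>\<^sub>\<infinity>n. F_summand M \<epsilon> \<tau> z n u)"
proof -
  have bij: "bij_betw (\<lambda>j. j + l) UNIV (UNIV :: int set)"
    by (rule bij_betwI[where g = "\<lambda>j. j - l"]) auto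
  have "(\<Sum>\<^sub>\<infinity>n. F_summand M \<epsilon> \<tau> z n (u + of_int l * \<tau> + of_int k))
      = (\<Sum>\<^sub>\<infinity>j. F_summand M \<epsilon> \<tau> z (j + l) (u + of_int l * \<tau> + of_int k))"
    using infsum_reindex_bij_betw[OF bij, of "\<lambda>n. F_summand M \<epsilon> \<tau> z n (u + of_int l * \<tau> + of_int k)"]
    by simp
  also have "\<dots> = (\<Sum>\<^sub>\<infinity>j. (-1) powi (l * \<epsilon>)
      * ee (- 2 * of_real M * of_int l * u + of_real M * of_int (l - l^2) * \<tau>) * F_summand M \<epsilon> \<tau> z j u)"
    by (simp add: F_summand_shift[OF assms])
  finally show ?thesis
    by (simp only: infsum_cmult_right')
qed

lemma F_quasi_periodic:
  assumes "M = real m / 2"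
  shows "F M \<epsilon> \<tau> z (u + of_int l * \<tau> + of_int k) =
    (-1) powi (int m * k + l * \<epsilon>)
    * exp (- 2 * of_real pi * \<i> * of_real M * (of_int l ^ 2 * \<tau> + 2 * of_int l * u))
    * F M \<epsilon> \<tau> z u"
proof -
  have M: "of_real M = (of_nat m / 2 :: complex)"
    unfolding assms by simp
  have shift: "ee (of_real M * (z - (u + of_int l * \<tau> + of_int k))) =
      ee (of_int (- (int m * k)) / 2) * ee (- of_real M * of_int l * \<tau>) * ee (of_real M * (z - u))"
    unfolding ee_add[symmetric] by (rule ee_eqI[where k = 0]) (simp add: M algebra_simps)
  have sign: "ee (of_int (- (int m * k)) / 2) * (-1) powi (l * \<epsilon>) = (-1) powi (int m * k + l * \<epsilon>)"
    by (simp add: ee_of_int_half power_int_minus_one_minus power_int_add del: of_int_minus)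
  have factor: "ee (- of_real M * of_int l * \<tau>)
      * ee (- 2 * of_real M * of_int l * u + of_real M * of_int (l - l^2) * \<tau>)
    = exp (- 2 * of_real pi * \<i> * of_real M * (of_int l ^ 2 * \<tau> + 2 * of_int l * u))"
    unfolding ee_add[symmetric] unfolding ee_def
    by (intro arg_cong[where f = exp]) (simp add: power2_eq_square algebra_simps)
  have "F M \<epsilon> \<tau> z (u + of_int l * \<tau> + of_int k)
      = (ee (of_int (- (int m * k)) / 2) * (-1) powi (l * \<epsilon>))
        * (ee (- of_real M * of_int l * \<tau>)
           * ee (- 2 * of_real M * of_int l * u + of_real M * of_int (l - l^2) * \<tau>))
        * (ee (of_real M * (z - u)) * (\<Sum>\<^sub>\<infinity>j. F_summand M \<epsilon> \<tau> z j u))"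
    unfolding F_eq_infsum infsum_F_summand_shift[OF assms] shift by (simp only: ac_simps)
  then show ?thesis
    unfolding sign factor F_eq_infsum .
qed

lemma diff_in_Ints_iff: "w - u \<in> \<int> \<longleftrightarrow> (\<exists>b::int. u = w + of_int b)"
  for w u :: complex
proof
  assume "w - u \<in> \<int>"
  then obtain b where "w - u = of_int b"
    by (auto elim: Ints_cases)
  then have "u = w + of_int (- b)"
    by (simp add: algebra_simps)
  then show "\<exists>b::int. u = w + of_int b" ..
qed auto

lemma F_denominator_eq_0_iff:
  "1 - ee (of_int n * \<tau>) * ee (z - u) = 0 \<longleftrightarrow> (\<exists>b::int. u = z + of_int n * \<tau> + of_int b)"
proof -
  have "1 - ee (of_int n * \<tau>) * ee (z - u) = 0 \<longleftrightarrow> (z + of_int n * \<tau>) - u \<in> \<int>"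
    by (auto simp flip: ee_add ee_eq_1_iff simp: algebra_simps)
  then show ?thesis
    by (simp add: diff_in_Ints_iff)
qed

lemma F_denominator_nonzero_off_lattice:
  "u \<notin> lattice_coset \<tau> z \<Longrightarrow> 1 - ee (of_int n * \<tau>) * ee (z - u) \<noteq> 0"
  unfolding F_denominator_eq_0_iff lattice_coset_def by blast

lemma F_denominator_nonzero_at_base_point:
  assumes "Im \<tau> \<noteq> 0" and "n \<noteq> 0"
  shows "1 - ee (of_int n * \<tau>) * ee (z - z) \<noteq> 0"
proof
  assume "1 - ee (of_int n * \<tau>) * ee (z - z) = 0"
  then obtain b :: int where "of_int n * \<tau> + of_int b = 0"
    unfolding F_denominator_eq_0_iff by (metis add.assoc add_cancel_left_right)
  then have "Im (of_int n * \<tau> + of_int b) = 0"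
    by simp
  then have "of_int n * Im \<tau> = 0"
    by simp
  with assms show False
    by simp
qed

lemma norm_F_summand:
  "norm (F_summand M \<epsilon> \<tau> z n u) =
    exp (2 * pi * M * of_int n * (2 * Im u - (of_int n + 1) * Im \<tau>))
    / norm (1 - ee (of_int n * \<tau> + (z - u)))"
  by (simp add: F_summand_def ee_add norm_divide norm_mult norm_power_int norm_ee
      flip: exp_add) (simp add: algebra_simps)

lemma summand_exponent_bounds:
  fixes x t a b Y :: real
  assumes "t > 0" and "\<bar>a\<bar> \<le> Y" and "\<bar>b - a\<bar> \<le> Y" and "(\<bar>x\<bar> - 1) * t \<ge> 2 * Y + 1"
  shows "1 \<le> \<bar>x * t + b - a\<bar>" and "x * (2 * a - (x + 1) * t) \<le> - \<bar>x\<bar>"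
proof -
  consider "x \<ge> 0" | "x < 0"
    by linarith
  then have "1 \<le> \<bar>x * t + b - a\<bar> \<and> x * (2 * a - (x + 1) * t) \<le> - \<bar>x\<bar>"
  proof cases
    case 1
    then have "2 * a - (x + 1) * t \<le> -1"
      using assms by (simp add: algebra_simps)
    then have "x * (2 * a - (x + 1) * t) \<le> x * -1"
      using 1 by (rule mult_left_mono)
    then show ?thesis
      using 1 assms by (simp add: algebra_simps)
  next
    case 2
    then have "1 \<le> 2 * a - (x + 1) * t"
      using assms by (simp add: algebra_simps)
    then have "x * (2 * a - (x + 1) * t) \<le> x * 1"
      using 2 by (intro mult_left_mono_neg) simp_all
    then show ?thesis
      using 2 assms by (simp add: algebra_simps)
  qed
  then show "1 \<le> \<bar>x * t + b - a\<bar>" "x * (2 * a - (x + 1) * t) \<le> - \<bar>x\<bar>"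
    by auto
qed

lemma norm_F_summand_le:
  assumes \<tau>: "Im \<tau> > 0" and M: "M \<ge> 1/2"
    and Y: "\<bar>Im u\<bar> \<le> Y" "\<bar>Im z - Im u\<bar> \<le> Y"
    and n: "(\<bar>of_int n\<bar> - 1) * Im \<tau> \<ge> 2 * Y + 1"
  shows "1 - ee (of_int n * \<tau>) * ee (z - u) \<noteq> 0"
    and "norm (F_summand M \<epsilon> \<tau> z n u) \<le> 2 * exp (- \<bar>of_int n\<bar>)"
proof -
  define x where "x = real_of_int n"
  have sep: "1 \<le> \<bar>x * Im \<tau> + Im z - Im u\<bar>"
    and decay: "x * (2 * Im u - (x + 1) * Im \<tau>) \<le> - \<bar>x\<bar>"
    using summand_exponent_bounds[OF \<tau> Y] n by (simp_all add: x_def)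
  have den: "1/2 \<le> norm (1 - ee (of_int n * \<tau> + (z - u)))"
    using sep by (intro norm_one_minus_ee_ge) (simp add: x_def)
  then show "1 - ee (of_int n * \<tau>) * ee (z - u) \<noteq> 0"
    by (auto simp flip: ee_add)
  have "3 * (1/2) \<le> pi * M"
    using M pi_gt3 by (intro mult_mono) auto
  then have "1 \<le> 2 * pi * M"
    by linarith
  then have "2 * pi * M * (x * (2 * Im u - (x + 1) * Im \<tau>)) \<le> - \<bar>x\<bar>"
    using decay mult_right_mono_neg[of 1 "2 * pi * M" "x * (2 * Im u - (x + 1) * Im \<tau>)"]
    by linarith
  then have num: "exp (2 * pi * M * x * (2 * Im u - (x + 1) * Im \<tau>)) \<le> exp (- \<bar>x\<bar>)"
    by (simp add: mult.assoc)
  have "norm (F_summand M \<epsilon> \<tau> z n u) \<le> exp (- \<bar>x\<bar>) / (1/2)"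
    unfolding norm_F_summand x_def[symmetric] by (rule frac_le) (use num den in simp_all)
  then show "norm (F_summand M \<epsilon> \<tau> z n u) \<le> 2 * exp (- \<bar>of_int n\<bar>)"
    by (simp add: x_def)
qed

lemma F_summand_bounded_on_ball:
  assumes "Im \<tau> > 0" and "M \<ge> 1/2"
  obtains N :: nat where
    "\<And>n u. int N \<le> \<bar>n\<bar> \<Longrightarrow> u \<in> ball x 1 \<Longrightarrow> 1 - ee (of_int n * \<tau>) * ee (z - u) \<noteq> 0"
    "\<And>n u. int N \<le> \<bar>n\<bar> \<Longrightarrow> u \<in> ball x 1 \<Longrightarrow>
       norm (F_summand M \<epsilon> \<tau> z n u) \<le> 2 * exp (- \<bar>of_int n\<bar>)"
proof
  define Y where "Y = \<bar>Im z\<bar> + \<bar>Im x\<bar> + 1"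
  define N where "N = nat \<lceil>(2 * Y + 1) / Im \<tau>\<rceil> + 1"
  fix n u assume n: "int N \<le> \<bar>n\<bar>" and u: "u \<in> ball x 1"
  have "\<bar>Im x - Im u\<bar> \<le> 1"
    using u abs_Im_le_cmod[of "x - u"] by (simp add: dist_norm)
  then have Y: "\<bar>Im u\<bar> \<le> Y" "\<bar>Im z - Im u\<bar> \<le> Y"
    unfolding Y_def by linarith+
  have "real N \<le> \<bar>of_int n\<bar>"
    using n by linarith
  then have "(2 * Y + 1) / Im \<tau> \<le> \<bar>of_int n\<bar> - 1"
    unfolding N_def using real_nat_ceiling_ge[of "(2 * Y + 1) / Im \<tau>"] by linarith
  then have "(\<bar>of_int n\<bar> - 1) * Im \<tau> \<ge> 2 * Y + 1"
    using assms(1) by (simp add: pos_divide_le_eq)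
  then show "1 - ee (of_int n * \<tau>) * ee (z - u) \<noteq> 0"
    and "norm (F_summand M \<epsilon> \<tau> z n u) \<le> 2 * exp (- \<bar>of_int n\<bar>)"
    using norm_F_summand_le[OF assms Y] by blast+
qed

lemma field_differentiable_ee:
  assumes "f field_differentiable (at x)"
  shows "(\<lambda>u. ee (f u)) field_differentiable (at x)"
proof -
  have "(\<lambda>u. 2 * of_real pi * \<i> * f u) field_differentiable (at x)"
    using assms by (intro derivative_intros)
  from field_differentiable_compose[OF this field_differentiable_within_exp[of _ UNIV]]
  show ?thesis
    by (simp add: o_def ee_def)
qed

lemma F_summand_field_differentiable:
  assumes "1 - ee (of_int n * \<tau>) * ee (z - x) \<noteq> 0"
  shows "(\<lambda>u. F_summand M \<epsilon> \<tau> z n u) field_differentiable (at x)"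
  using assms unfolding F_summand_def
  by (intro derivative_intros field_differentiable_ee) auto

lemma summable_exp_minus_of_nat: "summable (\<lambda>n. exp (- real n))"
proof -
  have "exp (- real n) = exp (-1) ^ n" for n
    by (simp flip: exp_of_nat_mult)
  then show ?thesis
    by (simp add: summable_geometric)
qed

lemma has_sum_int_pairs:
  fixes f :: "int \<Rightarrow> 'a :: banach"
  assumes pos: "summable (\<lambda>n. norm (f (int n)))" and neg: "summable (\<lambda>n. norm (f (- int n - 1)))"
  shows "(f has_sum (\<Sum>n. f (int n) + f (- int n - 1))) UNIV"
proof -
  have "((\<lambda>n. f (int n)) has_sum (\<Sum>n. f (int n))) UNIV"
    using norm_summable_imp_has_sum[OF pos summable_sums[OF summable_norm_cancel[OF pos]]] .
  then have nonneg: "(f has_sum (\<Sum>n. f (int n))) (range int)"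
    by (simp add: has_sum_reindex o_def)
  have "((\<lambda>n. f (- int n - 1)) has_sum (\<Sum>n. f (- int n - 1))) UNIV"
    using norm_summable_imp_has_sum[OF neg summable_sums[OF summable_norm_cancel[OF neg]]] .
  then have negative: "(f has_sum (\<Sum>n. f (- int n - 1))) (range (\<lambda>n. - int n - 1))"
    by (simp add: has_sum_reindex inj_on_def o_def)
  have "i \<in> range int \<union> range (\<lambda>n. - int n - 1)" for i :: int
  proof (cases "i \<ge> 0")
    case True
    then have "i = int (nat i)"
      by simp
    then show ?thesis
      by blast
  next
    case False
    then have "i = - int (nat (- i - 1)) - 1"
      by simp
    then show ?thesis
      by blast
  qed
  then have "range int \<union> range (\<lambda>n. - int n - 1) = UNIV"
    by blast
  moreover have "range int \<inter> range (\<lambda>n. - int n - 1) = {}"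
    by auto
  ultimately have "(f has_sum (\<Sum>n. f (int n)) + (\<Sum>n. f (- int n - 1))) UNIV"
    using has_sum_Un_disjoint[OF nonneg negative] by simp
  then show ?thesis
    using pos neg by (simp add: suminf_add summable_norm_cancel)
qed

text \<open>Pairing \<open>n\<close> with \<open>-n-1\<close> turns the sum over \<open>\<int>\<close> into a series over \<open>\<nat>\<close>, the setting of the
  library's M-test for series of holomorphic functions.\<close>

definition F_pair :: "real \<Rightarrow> int \<Rightarrow> complex \<Rightarrow> complex \<Rightarrow> nat \<Rightarrow> complex \<Rightarrow> complex" where
  "F_pair M \<epsilon> \<tau> z n u = F_summand M \<epsilon> \<tau> z (int n) u + F_summand M \<epsilon> \<tau> z (- int n - 1) u"

lemma F_eq_suminf_pairs:
  assumes "Im \<tau> > 0" and "M \<ge> 1/2"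
  shows "summable (\<lambda>n. F_pair M \<epsilon> \<tau> z n u)"
    and "F M \<epsilon> \<tau> z u = ee (of_real M * (z - u)) * (\<Sum>n. F_pair M \<epsilon> \<tau> z n u)"
proof -
  obtain N where bound: "\<And>n v. int N \<le> \<bar>n\<bar> \<Longrightarrow> v \<in> ball u 1 \<Longrightarrow>
      norm (F_summand M \<epsilon> \<tau> z n v) \<le> 2 * exp (- \<bar>of_int n\<bar>)"
    using F_summand_bounded_on_ball[OF assms] by metis
  have major: "summable (\<lambda>n. 2 * exp (- real n))"
    by (intro summable_mult summable_exp_minus_of_nat)
  have "norm (F_summand M \<epsilon> \<tau> z (int n) u) \<le> 2 * exp (- real n)" if "N \<le> n" for n
    using bound[of "int n" u] that by simp
  then have pos: "summable (\<lambda>n. norm (F_summand M \<epsilon> \<tau> z (int n) u))"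
    by (intro summable_comparison_test_ev[OF _ major]) (auto simp: eventually_sequentially)
  have "norm (F_summand M \<epsilon> \<tau> z (- int n - 1) u) \<le> 2 * exp (- real n)" if "N \<le> n" for n
  proof -
    have "norm (F_summand M \<epsilon> \<tau> z (- int n - 1) u) \<le> 2 * exp (- 1 - real n)"
      using bound[of "- int n - 1" u] that by simp
    also have "\<dots> \<le> 2 * exp (- real n)"
      by simp
    finally show ?thesis .
  qed
  then have neg: "summable (\<lambda>n. norm (F_summand M \<epsilon> \<tau> z (- int n - 1) u))"
    by (intro summable_comparison_test_ev[OF _ major]) (auto simp: eventually_sequentially)
  show "summable (\<lambda>n. F_pair M \<epsilon> \<tau> z n u)"
    unfolding F_pair_def using summable_norm_cancel[OF pos] summable_norm_cancel[OF neg]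
    by (rule summable_add)
  have "(\<Sum>\<^sub>\<infinity>n. F_summand M \<epsilon> \<tau> z n u) = (\<Sum>n. F_pair M \<epsilon> \<tau> z n u)"
    unfolding F_pair_def using has_sum_int_pairs[OF pos neg] by (rule infsumI)
  then show "F M \<epsilon> \<tau> z u = ee (of_real M * (z - u)) * (\<Sum>n. F_pair M \<epsilon> \<tau> z n u)"
    by (simp add: F_eq_infsum)
qed

lemma norm_F_pair_le:
  assumes bound: "\<And>n. int N \<le> \<bar>n\<bar> \<Longrightarrow> norm (F_summand M \<epsilon> \<tau> z n y) \<le> 2 * exp (- \<bar>of_int n\<bar>)"
    and K: "N \<le> K"
  shows "norm (F_pair M \<epsilon> \<tau> z (n + K) y) \<le> 4 * exp (- real n)"
proof -
  have "norm (F_summand M \<epsilon> \<tau> z (int (n + K)) y) \<le> 2 * exp (- real (n + K))"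
    using bound[of "int (n + K)"] K by simp
  moreover have "norm (F_summand M \<epsilon> \<tau> z (- int (n + K) - 1) y) \<le> 2 * exp (- real (n + K))"
    using bound[of "- int (n + K) - 1"] K by (simp add: order_trans[OF _ mult_left_mono])
  moreover have "2 * exp (- real (n + K)) \<le> 2 * exp (- real n)"
    by simp
  ultimately show ?thesis
    unfolding F_pair_def
    using norm_triangle_ineq[of "F_summand M \<epsilon> \<tau> z (int (n + K)) y"
        "F_summand M \<epsilon> \<tau> z (- int (n + K) - 1) y"]
    by linarith
qed

lemma F_pair_tail_holomorphic:
  assumes "Im \<tau> > 0" and "M \<ge> 1/2"
  obtains N where "\<And>K. N \<le> K \<Longrightarrow> (\<lambda>y. \<Sum>n. F_pair M \<epsilon> \<tau> z (n + K) y) holomorphic_on ball x 1"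
proof -
  obtain N where den: "\<And>n y. int N \<le> \<bar>n\<bar> \<Longrightarrow> y \<in> ball x 1 \<Longrightarrow> 1 - ee (of_int n * \<tau>) * ee (z - y) \<noteq> 0"
    and bound: "\<And>n y. int N \<le> \<bar>n\<bar> \<Longrightarrow> y \<in> ball x 1 \<Longrightarrow>
      norm (F_summand M \<epsilon> \<tau> z n y) \<le> 2 * exp (- \<bar>of_int n\<bar>)"
    using F_summand_bounded_on_ball[OF assms] by metis
  have "(\<lambda>y. \<Sum>n. F_pair M \<epsilon> \<tau> z (n + K) y) holomorphic_on ball x 1" if K: "N \<le> K" for K
  proof -
    define f where "f n y = F_pair M \<epsilon> \<tau> z (n + K) y" for n y
    have f_deriv: "(f n has_field_derivative deriv (f n) y) (at y)" if "y \<in> ball x 1" for n y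
    proof -
      have "f n field_differentiable (at y)"
        unfolding f_def F_pair_def using that K
        by (intro field_differentiable_add F_summand_field_differentiable den) simp_all
      then show ?thesis
        by (simp add: DERIV_deriv_iff_field_differentiable)
    qed
    have f_bound: "norm (f n y) \<le> 4 * exp (- real n)" if "y \<in> ball x 1" for n y
      unfolding f_def using norm_F_pair_le[OF bound[OF _ that] K] .
    have major: "summable (\<lambda>n. 4 * exp (- real n))"
      by (intro summable_mult summable_exp_minus_of_nat)
    have eventually_bound: "\<forall>\<^sub>F n in sequentially. \<forall>y\<in>ball x 1. norm (f n y) \<le> 4 * exp (- real n)"
      using f_bound by simp
    obtain T T' where T: "\<forall>y\<in>ball x 1.
        (\<lambda>n. f n y) sums T y \<and> (\<lambda>n. deriv (f n) y) sums T' y \<and> (T has_field_derivative T' y) (at y)"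
      using series_and_derivative_comparison[OF open_ball major f_deriv eventually_bound] by blast
    then have "T holomorphic_on ball x 1"
      unfolding holomorphic_on_def field_differentiable_def using has_field_derivative_at_within by blast
    then show ?thesis
      by (rule holomorphic_transform) (use T in \<open>simp add: f_def sums_iff\<close>)
  qed
  then show ?thesis
    by (rule that)
qed

lemma F_local_representation:
  assumes "Im \<tau> > 0" and "M \<ge> 1/2"
  obtains N T where "T holomorphic_on ball x 1"
    and "\<And>y. y \<in> ball x 1 \<Longrightarrow>
      F M \<epsilon> \<tau> z y = ee (of_real M * (z - y)) * ((\<Sum>n\<le>N. F_pair M \<epsilon> \<tau> z n y) + T y)"
proof -
  obtain N where tail: "\<And>K. N \<le> K \<Longrightarrow> (\<lambda>y. \<Sum>n. F_pair M \<epsilon> \<tau> z (n + K) y) holomorphic_on ball x 1"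
    using F_pair_tail_holomorphic[OF assms] by metis
  show ?thesis
  proof (rule that)
    show "(\<lambda>y. \<Sum>n. F_pair M \<epsilon> \<tau> z (n + Suc N) y) holomorphic_on ball x 1"
      by (rule tail) simp
    fix y
    have "(\<Sum>n. F_pair M \<epsilon> \<tau> z n y)
        = (\<Sum>n\<le>N. F_pair M \<epsilon> \<tau> z n y) + (\<Sum>n. F_pair M \<epsilon> \<tau> z (n + Suc N) y)"
      using suminf_split_initial_segment[OF F_eq_suminf_pairs(1)[OF assms, where \<epsilon> = \<epsilon> and z = z and u = y],
          where k = "Suc N"]
      by (simp add: lessThan_Suc_atMost)
    then show "F M \<epsilon> \<tau> z y = ee (of_real M * (z - y))
        * ((\<Sum>n\<le>N. F_pair M \<epsilon> \<tau> z n y) + (\<Sum>n. F_pair M \<epsilon> \<tau> z (n + Suc N) y))"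
      by (simp add: F_eq_suminf_pairs(2)[OF assms])
  qed
qed

lemma F_holomorphic_off_lattice:
  assumes "Im \<tau> > 0" and "M \<ge> 1/2"
  shows "F M \<epsilon> \<tau> z holomorphic_on (- lattice_coset \<tau> z)"
  unfolding holomorphic_on_def
proof
  fix x assume "x \<in> - lattice_coset \<tau> z"
  then have den: "1 - ee (of_int n * \<tau>) * ee (z - x) \<noteq> 0" for n
    by (intro F_denominator_nonzero_off_lattice) simp
  obtain N T where T: "T holomorphic_on ball x 1"
    and rep: "\<And>y. y \<in> ball x 1 \<Longrightarrow>
      F M \<epsilon> \<tau> z y = ee (of_real M * (z - y)) * ((\<Sum>n\<le>N. F_pair M \<epsilon> \<tau> z n y) + T y)"
    using F_local_representation[OF assms] by metis
  have T_x: "T field_differentiable (at x)"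
    using T by (simp add: holomorphic_on_imp_differentiable_at)
  have "(\<lambda>y. ee (of_real M * (z - y)) * ((\<Sum>n\<le>N. F_pair M \<epsilon> \<tau> z n y) + T y))
      field_differentiable (at x)"
    unfolding F_pair_def
    by (intro field_differentiable_mult field_differentiable_ee field_differentiable_add
        field_differentiable_sum F_summand_field_differentiable den T_x field_differentiable_diff
        field_differentiable_const field_differentiable_ident)
  then have "F M \<epsilon> \<tau> z field_differentiable (at x)"
    by (rule field_differentiable_transform_within[rotated 3, where d = 1]) (auto simp: rep dist_commute)
  then show "F M \<epsilon> \<tau> z field_differentiable (at x within - lattice_coset \<tau> z)"
    by (rule field_differentiable_at_within)
qed

lemma tendsto_div_one_minus_ee:
  "((\<lambda>y. (y - z) / (1 - ee (z - y))) \<longlongrightarrow> 1 / (2 * of_real pi * \<i>)) (at z)"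
proof -
  have "((\<lambda>y. 1 - ee (z - y)) has_field_derivative 2 * of_real pi * \<i>) (at z)"
    unfolding ee_def by (auto intro!: derivative_eq_intros)
  then have "((\<lambda>y. (1 - ee (z - y)) / (y - z)) \<longlongrightarrow> 2 * of_real pi * \<i>) (at z)"
    by (simp add: has_field_derivative_iff ee_def)
  then have "((\<lambda>y. inverse ((1 - ee (z - y)) / (y - z))) \<longlongrightarrow> inverse (2 * of_real pi * \<i>)) (at z)"
    by (rule tendsto_inverse) simp
  then show ?thesis
    by (simp add: inverse_eq_divide)
qed

lemma F_summand_0: "F_summand M \<epsilon> \<tau> z 0 u = 1 / (1 - ee (z - u))"
  by (simp add: F_summand_def ee_def)

lemma F_residue_at_base_point:
  assumes "Im \<tau> > 0" and "M \<ge> 1/2"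
  shows "((\<lambda>u. (u - z) * F M \<epsilon> \<tau> z u) \<longlongrightarrow> 1 / (2 * of_real pi * \<i>)) (at z)"
proof -
  obtain N T where T: "T holomorphic_on ball z 1"
    and rep: "\<And>y. y \<in> ball z 1 \<Longrightarrow>
      F M \<epsilon> \<tau> z y = ee (of_real M * (z - y)) * ((\<Sum>n\<le>N. F_pair M \<epsilon> \<tau> z n y) + T y)"
    using F_local_representation[OF assms] by metis
  \<comment> \<open>the summand \<open>n = 0\<close> carries the pole; all other summands are regular at \<open>z\<close>\<close>
  define R where "R y = F_summand M \<epsilon> \<tau> z (-1) y + (\<Sum>n<N. F_pair M \<epsilon> \<tau> z (Suc n) y) + T y" for y
  have split: "(y - z) * F M \<epsilon> \<tau> z y
      = ee (of_real M * (z - y)) * ((y - z) / (1 - ee (z - y)) + (y - z) * R y)"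
    if "y \<in> ball z 1" for y
  proof -
    have "(\<Sum>n\<le>N. F_pair M \<epsilon> \<tau> z n y) + T y = F_summand M \<epsilon> \<tau> z 0 y + R y"
      by (simp add: R_def sum.atMost_shift F_pair_def)
    then show ?thesis
      by (simp add: rep[OF that] F_summand_0 ring_distribs mult_ac)
  qed
  have "T field_differentiable (at z)"
    using T by (simp add: holomorphic_on_imp_differentiable_at)
  then have R: "R field_differentiable (at z)"
    unfolding R_def[abs_def] F_pair_def
    by (intro field_differentiable_add field_differentiable_sum F_summand_field_differentiable
        F_denominator_nonzero_at_base_point) (use assms in auto)
  have regular: "((\<lambda>y. (y - z) * R y) \<longlongrightarrow> 0 * R z) (at z)"
  proof (rule tendsto_mult)
    show "((\<lambda>y. y - z) \<longlongrightarrow> 0) (at z)"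
      by (intro tendsto_eq_intros) auto
    show "(R \<longlongrightarrow> R z) (at z)"
      using field_differentiable_imp_continuous_at[OF R] by (simp add: isCont_def)
  qed
  have factor: "((\<lambda>y. ee (of_real M * (z - y))) \<longlongrightarrow> 1) (at z)"
    unfolding ee_def by (rule tendsto_eq_intros | simp)+
  have "((\<lambda>y. ee (of_real M * (z - y)) * ((y - z) / (1 - ee (z - y)) + (y - z) * R y))
      \<longlongrightarrow> 1 * (1 / (2 * of_real pi * \<i>) + 0 * R z)) (at z)"
    by (intro tendsto_mult[OF factor] tendsto_add[OF tendsto_div_one_minus_ee regular])
  then have "((\<lambda>y. ee (of_real M * (z - y)) * ((y - z) / (1 - ee (z - y)) + (y - z) * R y))
      \<longlongrightarrow> 1 / (2 * of_real pi * \<i>)) (at z)"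
    by simp
  moreover have "\<forall>\<^sub>F y in at z.
      ee (of_real M * (z - y)) * ((y - z) / (1 - ee (z - y)) + (y - z) * R y) = (y - z) * F M \<epsilon> \<tau> z y"
    unfolding eventually_at by (rule exI[of _ 1]) (simp add: split dist_commute)
  ultimately show ?thesis
    by (rule Lim_transform_eventually)
qed

lemma at_most_simple_pole_translate:
  assumes "at_most_simple_pole f w" and "\<And>u. f (u + d) = c u * f u" and "isCont c w"
  shows "at_most_simple_pole f (w + d)"
proof -
  obtain L where "((\<lambda>u. (u - w) * f u) \<longlongrightarrow> L) (at w)"
    using assms(1) unfolding at_most_simple_pole_def by blast
  then have "((\<lambda>u. c u * ((u - w) * f u)) \<longlongrightarrow> c w * L) (at w)"
    using assms(3) by (intro tendsto_mult) (simp_all add: isCont_def)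
  then have "((\<lambda>u. (u - w) * f (u + d)) \<longlongrightarrow> c w * L) (at w)"
    by (simp add: assms(2) mult_ac)
  from LIM_offset[OF this, of "- d"] have "((\<lambda>v. (v - (w + d)) * f v) \<longlongrightarrow> c w * L) (at (w + d))"
    by (simp add: algebra_simps)
  then show ?thesis
    unfolding at_most_simple_pole_def by blast
qed

theorem lemma3p1:
  fixes m :: nat and M :: real and \<epsilon> :: int and \<tau> z :: complex
  assumes "m > 0" and "M = real m / 2"
    and "\<epsilon> \<in> {0, 1}"
    and "Im \<tau> > 0"
  shows "(\<forall>l k :: int. \<forall>u. u \<notin> lattice_coset \<tau> z \<longrightarrow>
            F M \<epsilon> \<tau> z (u + of_int l * \<tau> + of_int k) =
              (-1) powi (int m * k + l * \<epsilon>)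
              * exp (- 2 * of_real pi * \<i> * of_real M * (of_int l ^ 2 * \<tau> + 2 * of_int l * u))
              * F M \<epsilon> \<tau> z u)
       \<and> F M \<epsilon> \<tau> z holomorphic_on (- lattice_coset \<tau> z)
       \<and> (\<forall>w \<in> lattice_coset \<tau> z. at_most_simple_pole (F M \<epsilon> \<tau> z) w)
       \<and> simple_pole_residue (F M \<epsilon> \<tau> z) z (1 / (2 * of_real pi * \<i>))"
proof -
  have M: "M \<ge> 1/2"
    using assms(1,2) by simp
  note quasi_periodic = F_quasi_periodic[OF assms(2)]
  have residue: "((\<lambda>u. (u - z) * F M \<epsilon> \<tau> z u) \<longlongrightarrow> 1 / (2 * of_real pi * \<i>)) (at z)"
    using F_residue_at_base_point[OF assms(4) M] .
  have "at_most_simple_pole (F M \<epsilon> \<tau> z) (z + (of_int a * \<tau> + of_int b))" for a b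
  proof (rule at_most_simple_pole_translate)
    show "at_most_simple_pole (F M \<epsilon> \<tau> z) z"
      unfolding at_most_simple_pole_def using residue by blast
    show "F M \<epsilon> \<tau> z (u + (of_int a * \<tau> + of_int b)) =
        (-1) powi (int m * b + a * \<epsilon>)
        * exp (- 2 * of_real pi * \<i> * of_real M * (of_int a ^ 2 * \<tau> + 2 * of_int a * u))
        * F M \<epsilon> \<tau> z u" for u
      using quasi_periodic[where l = a and k = b and u = u] by (simp add: add.assoc)
  qed (intro continuous_intros)
  then have "\<forall>w \<in> lattice_coset \<tau> z. at_most_simple_pole (F M \<epsilon> \<tau> z) w"
    unfolding lattice_coset_def by (auto simp: add.assoc)
  then show ?thesis
    using quasi_periodic F_holomorphic_off_lattice[OF assms(4) M] residue
    unfolding simple_pole_residue_def by blast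
qed

end
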